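(* The GRL-GUM interaction protocol described in the context satisfies the Guaranteed Utility Property: there exist sequences of agent valuation functions $q^{*,1}_{1:T},\dots,q^{*,k}_{1:T}$ and constants $C^1,\dots,C^k\in\mathbb{R}$ such that (1) for each agent $i$ and every sequence of reports $\overline{q^{-i}_{1:T}}$ of the other agents, $\mathbb{E}[U^i(q^{*,i}_{1:T},\overline{q^{-i}_{1:T}})]\ge C^i$; and (2) $\sup_{\overline{q^{1:k}_{1:T}}}\sum_i\mathbb{E}[U^i(\overline{q^{1:k}_{1:T}})]=\sum_i C^i$, where expectations are over the randomness of the protocol run in $\phi$.
   Context: There are $k$ agents, horizon $T$, a multi-agent environment $\phi$ giving $\phi(\overline{or_t}\mid\overline{h_{t-1}}\,\overline{a_t})$, known to the principal (mechanism designer) and the agents. Joint histories are $\overline{h_t}=\overline{a_1}\,\overline{or_1}\cdots\overline{a_t}\,\overline{or_t}$, joint percepts $\overline{or_t}=(or_{t,1},\dots,or_{t,k})$ with agent $j$'s reward $r_t^j$. Partial histories: $\overline{h_t^{1:i}}=\overline{h_{t-1}}\,\overline{a_t}\,or_{t,1}\cdots or_{t,i}$, with $\overline{h_t^{1:0}}=\overline{h_{t-1}}\,\overline{a_t}$ and $\overline{h_0^{1:i}}=\epsilon$. For a profile $\widehat q^{1:k}$ of functions of joint actions, $f$ selects $\arg\max_{\overline a}\sum_j\widehat q^j(\overline{h_{t-1}},\overline a)$. The (true) q-functions are $q_t^i(\overline{h_{t-1}},\overline{a_t})=0$ for $t>T$ and otherwise $\sum_{\overline{or_t}}\phi(\overline{or_t}\mid\overline{h_{t-1}}\,\overline{a_t})[r_t^i+\overline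 q_{t+1}^i(\overline{h_{t-1}}\,\overline{a_t}\,\overline{or_t})]$, with $\overline q_t^i(\overline{h_{t-1}})=q_t^i(\overline{h_{t-1}},f(q_t^{1:k}(\overline{h_{t-1}},\cdot)))$. The principal's anticipated cumulative payoff for agent $j$ is $\Upsilon_t^j(\overline{h_{t-1}^{1:i}},\widehat q^{1:k})=\mathbb{E}_{or_{t-1,(i+1):k}\sim\phi}\big[\sum_{s=1}^{t-1}r_s^j+q_t^j(\overline{h_{t-1}},f(\widehat q^{1:k}(\overline{h_{t-1}},\cdot)))\big]$ (expectation over the remaining percept components given the partial history), $\Upsilon_{T+1}^j(\overline{h_T^{1:i}},\epsilon)=\mathbb{E}_{or_{T,(i+1):k}\sim\phi}[\sum_{s=1}^T r_s^j]$, and $\Upsilon_1^j(\epsilon,\widehat q_1^{1:k})=q_1^j(\epsilon,f(\widehat q_1^{1:k}(\epsilon,\cdot)))$. GRL-GUM protocol: at each time $t$, each agent $i$ submits a report $\widetilde q_t^i(\overline{h_{t-1}},\cdot)$; the joint action $\overline{a_t^*}=\arg\max_{\overline a}\sum_i\widetilde q_t^i(\overline{h_{t-1}},\overline a)$ is executed; $\overline{or_t}\sim\phi(\cdot\mid\overline{h_{t-1}}\,\overline{a_t^*})$ is sampled and each agent receives its percept; transfers are $\gamma_t^{i\to j}=\Upsilon_t^j(\overline{h_{t-1}^{1:i}},(\widetilde q_t^1,\dots,\widetilde q_t^i,q_t^{i+1},\dots,q_t^k))-\Upsilon_t^j(\overline{h_{t-1}^{1:(i-1)}},(\widetilde q_t^1,\dots,\widetilde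 q_t^{i-1},q_t^i,\dots,q_t^k))$ (paid by $i$ to $j$, with $q_t^l$ the true q-functions), and $p_t^i=\sum_{j\neq i}\gamma_t^{i\to j}-\sum_{j\neq i}\gamma_t^{j\to i}$. Agent $i$'s total utility is $U^i=\sum_{t=1}^T(r_t^i+p_t^i)$, a random variable depending on $\phi$ and the submitted report sequences $\overline{q^{1:k}_{1:T}}$. *)

theory Defs
  imports "HOL-Probability.Probability"
begin

text \<open>Joint histories: lists of (joint action, joint percept) pairs, where a joint
  percept is the list of the k individual percepts (agents are indexed 0..k-1,
  agent m corresponding to agent m+1 of the paper).\<close>

type_synonym ('a, 'p) hist = "('a \<times> 'p list) list"

locale grl_env =
  fixes T :: nat and k :: nat
    and \<phi> :: "('a, 'p) hist \<Rightarrow> 'a \<Rightarrow> 'p list pmf"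
    and rwd :: "'p \<Rightarrow> real"
    and f :: "('a \<Rightarrow> real) \<Rightarrow> 'a"
begin

primrec qv :: "nat \<Rightarrow> nat \<Rightarrow> ('a, 'p) hist \<Rightarrow> 'a \<Rightarrow> real" where
  "qv 0 i h a = 0"
| "qv (Suc n) i h a =
     measure_pmf.expectation (\<phi> h a)
       (\<lambda>x. rwd (x ! i) + qv n i (h @ [(a, x)])
              (f (\<lambda>b. \<Sum>l<k. qv n l (h @ [(a, x)]) b)))"

text \<open>q_t^i (h_{t-1}, a); zero for t > T.\<close>
definition qt :: "nat \<Rightarrow> nat \<Rightarrow> ('a, 'p) hist \<Rightarrow> 'a \<Rightarrow> real" where
  "qt t i h a = qv (Suc T - t) i h a"

definition cumrew :: "nat \<Rightarrow> ('a, 'p) hist \<Rightarrow> real" where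
  "cumrew j h = (\<Sum>x\<leftarrow>h. rwd (snd x ! j))"

text \<open>Upsilon_t^j for t >= 2: partial history h_{t-2} a_{t-1} pre, with pre the first
  (length pre) components of or_{t-1}; the expectation is over the conditional
  distribution of or_{t-1} given that prefix.\<close>
definition Ups :: "nat \<Rightarrow> nat \<Rightarrow> ('a, 'p) hist \<Rightarrow> 'a \<Rightarrow> 'p list
                   \<Rightarrow> (nat \<Rightarrow> ('a, 'p) hist \<Rightarrow> 'a \<Rightarrow> real) \<Rightarrow> real" where
  "Ups t j g a pre Q =
     measure_pmf.expectation (cond_pmf (\<phi> g a) {x. take (length pre) x = pre})
       (\<lambda>x. cumrew j (g @ [(a, x)]) +
            qt t j (g @ [(a, x)]) (f (\<lambda>b. \<Sum>l<k. Q l (g @ [(a, x)]) b)))"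

text \<open>Upsilon_t^j evaluated at the partial history h_{t-1}^{1:i} of a realised history h.\<close>
definition UpsAt :: "nat \<Rightarrow> nat \<Rightarrow> ('a, 'p) hist \<Rightarrow> nat
                     \<Rightarrow> (nat \<Rightarrow> ('a, 'p) hist \<Rightarrow> 'a \<Rightarrow> real) \<Rightarrow> real" where
  "UpsAt t j h i Q =
     (if t = 1 then qt 1 j [] (f (\<lambda>b. \<Sum>l<k. Q l [] b))
      else Ups t j (take (t - 2) h) (fst (h ! (t - 2))) (take i (snd (h ! (t - 2)))) Q)"

text \<open>Report sequences: rep m t is agent m's report at time t (a function of the
  joint history h_{t-1} and the joint action).\<close>
definition prof :: "(nat \<Rightarrow> nat \<Rightarrow> ('a, 'p) hist \<Rightarrow> 'a \<Rightarrow> real) \<Rightarrow> nat \<Rightarrow> nat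
                    \<Rightarrow> nat \<Rightarrow> ('a, 'p) hist \<Rightarrow> 'a \<Rightarrow> real" where
  "prof rep t n = (\<lambda>m. if m < n then rep m t else qt t m)"

text \<open>gamma_t^{l -> j} (paid by l to j).\<close>
definition gam :: "(nat \<Rightarrow> nat \<Rightarrow> ('a, 'p) hist \<Rightarrow> 'a \<Rightarrow> real) \<Rightarrow> nat \<Rightarrow> nat \<Rightarrow> nat
                   \<Rightarrow> ('a, 'p) hist \<Rightarrow> real" where
  "gam rep t l j h = UpsAt t j h (Suc l) (prof rep t (Suc l)) - UpsAt t j h l (prof rep t l)"

definition pay :: "(nat \<Rightarrow> nat \<Rightarrow> ('a, 'p) hist \<Rightarrow> 'a \<Rightarrow> real) \<Rightarrow> nat \<Rightarrow> nat
                   \<Rightarrow> ('a, 'p) hist \<Rightarrow> real" where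
  "pay rep t i h = (\<Sum>j\<in>{..<k} - {i}. gam rep t i j h) - (\<Sum>j\<in>{..<k} - {i}. gam rep t j i h)"

definition util :: "(nat \<Rightarrow> nat \<Rightarrow> ('a, 'p) hist \<Rightarrow> 'a \<Rightarrow> real) \<Rightarrow> nat
                    \<Rightarrow> ('a, 'p) hist \<Rightarrow> real" where
  "util rep i h = (\<Sum>t = 1..T. rwd (snd (h ! (t - 1)) ! i) + pay rep t i h)"

primrec run :: "(nat \<Rightarrow> nat \<Rightarrow> ('a, 'p) hist \<Rightarrow> 'a \<Rightarrow> real) \<Rightarrow> nat \<Rightarrow> ('a, 'p) hist pmf" where
  "run rep 0 = return_pmf []"
| "run rep (Suc n) =
     bind_pmf (run rep n)
       (\<lambda>h. let a = f (\<lambda>b. \<Sum>m<k. rep m (Suc n) h b)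
            in map_pmf (\<lambda>x. h @ [(a, x)]) (\<phi> h a))"

definition EU :: "(nat \<Rightarrow> nat \<Rightarrow> ('a, 'p) hist \<Rightarrow> 'a \<Rightarrow> real) \<Rightarrow> nat \<Rightarrow> real" where
  "EU rep i = measure_pmf.expectation (run rep T) (util rep i)"

end

end

theory Submission
  imports Defs
begin

text \<open>If agent i reports truthfully, the profile used by the Upsilon before and after
  agent i's turn is the same, so its outgoing transfers only differ in how many
  components of the current percept are revealed; by the law of total expectation
  they have expectation zero. Its incoming transfers telescope over the payers to the
  anticipated value of i under the reported profile minus that under the true one,
  and the Bellman equation for the true q-functions makes these differences telescope
  over time. What remains is the anticipated value of i at the start under the true
  q-functions, whatever the others report. The transfers are budget balanced, so the
  expected total utility is the expected total reward, which the Bellman equation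
  for the maximising rule f bounds by the same sum; truthful reports attain it.\<close>

abbreviation E :: "'b pmf \<Rightarrow> ('b \<Rightarrow> real) \<Rightarrow> real" where
  "E p g \<equiv> measure_pmf.expectation p g"

lemma E_cong: "(\<And>x. x \<in> set_pmf p \<Longrightarrow> F x = G x) \<Longrightarrow> E p F = E p G"
  by (rule integral_cong_AE) (auto simp: AE_measure_pmf_iff)

lemma E_const_add:
  assumes "finite (set_pmf p)"
  shows "E p (\<lambda>x. c + g x) = c + E p g"
  using assms by (simp add: Bochner_Integration.integral_add integrable_measure_pmf_finite)

lemma E_bind_pmf_finite:
  assumes fin: "finite (set_pmf (bind_pmf M N))"
  shows "E (bind_pmf M N) F = E M (\<lambda>x. E (N x) F)"
proof -
  define S where "S = set_pmf (bind_pmf M N)"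
  define G where "G x = (if x \<in> S then F x else 0)" for x
  have G_bounded: "\<bar>G x\<bar> \<le> (\<Sum>y\<in>S. \<bar>F y\<bar>)" for x
    using fin by (auto simp: G_def S_def intro!: member_le_sum)
  have "E (bind_pmf M N) F = E (bind_pmf M N) G"
    by (rule E_cong) (simp add: G_def S_def)
  also have "\<dots> = E M (\<lambda>x. E (N x) G)"
    unfolding measure_pmf_bind
    by (rule integral_bind[where K="count_space UNIV" and B="\<Sum>y\<in>S. \<bar>F y\<bar>" and B'=1])
       (auto simp: G_bounded measurable_measure_pmf measure_pmf.finite_measure_axioms
         measure_pmf_in_subprob_algebra measure_pmf.emeasure_space_1)
  also have "\<dots> = E M (\<lambda>x. E (N x) F)"
    by (rule E_cong, rule E_cong) (auto simp: G_def S_def)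
  finally show ?thesis .
qed

lemma E_cond_pmf_total:
  assumes "finite (set_pmf p)"
  shows "E p (\<lambda>x. E (cond_pmf p {y. \<pi> y = \<pi> x}) F) = E p F"
proof -
  have bind_cond: "bind_pmf p (\<lambda>x. cond_pmf p {y. \<pi> y = \<pi> x}) = p"
  proof (rule bind_cond_pmf_cancel)
    fix x y assume "\<pi> y = \<pi> x"
    then have "{y'. \<pi> y' = \<pi> x} = {x'. \<pi> y = \<pi> x'}" by auto
    then show "measure_pmf.prob p {y'. \<pi> y' = \<pi> x} = measure_pmf.prob p {x'. \<pi> y = \<pi> x'}"
      by simp
  qed auto
  have "E p F = E (bind_pmf p (\<lambda>x. cond_pmf p {y. \<pi> y = \<pi> x})) F"
    by (simp add: bind_cond)
  also have "\<dots> = E p (\<lambda>x. E (cond_pmf p {y. \<pi> y = \<pi> x}) F)"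
    by (rule E_bind_pmf_finite) (simp add: bind_cond assms)
  finally show ?thesis by simp
qed

type_synonym ('a, 'p) profile = "nat \<Rightarrow> ('a, 'p) hist \<Rightarrow> 'a \<Rightarrow> real"

type_synonym ('a, 'p) reports = "nat \<Rightarrow> nat \<Rightarrow> ('a, 'p) hist \<Rightarrow> 'a \<Rightarrow> real"

locale grl_finite = grl_env T k \<phi> rwd f
  for T k :: nat and \<phi> :: "('a, 'p) hist \<Rightarrow> 'a \<Rightarrow> 'p list pmf"
    and rwd :: "'p \<Rightarrow> real" and f :: "('a \<Rightarrow> real) \<Rightarrow> 'a" +
  assumes percept_length: "\<And>h a x. x \<in> set_pmf (\<phi> h a) \<Longrightarrow> length x = k"
    and finite_percepts: "finite (UNIV :: 'p set)"
begin

definition action :: "('a, 'p) reports \<Rightarrow> nat \<Rightarrow> ('a, 'p) hist \<Rightarrow> 'a"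
  where "action rep t h = f (\<lambda>b. \<Sum>m<k. rep m t h b)"

lemma finite_set_pmf_phi: "finite (set_pmf (\<phi> h a))"
proof (rule finite_subset)
  show "set_pmf (\<phi> h a) \<subseteq> {xs. set xs \<subseteq> UNIV \<and> length xs = k}"
    using percept_length by auto
  show "finite {xs. set xs \<subseteq> (UNIV :: 'p set) \<and> length xs = k}"
    using finite_lists_length_eq[OF finite_percepts] by simp
qed

lemma integrable_phi: "integrable (measure_pmf (\<phi> h a)) (g :: _ \<Rightarrow> real)"
  by (rule integrable_measure_pmf_finite[OF finite_set_pmf_phi])

lemma run_Suc_action: "run rep (Suc n) = bind_pmf (run rep n)
   (\<lambda>h. map_pmf (\<lambda>x. h @ [(action rep (Suc n) h, x)]) (\<phi> h (action rep (Suc n) h)))"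
  by (simp add: action_def Let_def)

declare run.simps(2)[simp del]

lemma length_run: "h \<in> set_pmf (run rep n) \<Longrightarrow> length h = n"
  by (induction n arbitrary: h) (auto simp: run_Suc_action)

lemma finite_set_pmf_run: "finite (set_pmf (run rep n))"
  by (induction n) (auto simp: run_Suc_action finite_set_pmf_phi)

lemma integrable_run: "integrable (measure_pmf (run rep n)) (g :: _ \<Rightarrow> real)"
  by (rule integrable_measure_pmf_finite[OF finite_set_pmf_run])

lemma map_pmf_take_run: "m \<le> n \<Longrightarrow> map_pmf (take m) (run rep n) = run rep m"
proof (induction n)
  case 0
  then show ?case by simp
next
  case (Suc n)
  show ?case
  proof (cases "m = Suc n")
    case True
    then show ?thesis by (auto intro!: map_pmf_idI dest: length_run)
  next
    case False
    with Suc.prems have "m \<le> n" by simp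
    then have "map_pmf (take m) (run rep (Suc n)) = bind_pmf (run rep n) (\<lambda>h. return_pmf (take m h))"
      unfolding run_Suc_action map_bind_pmf
      by (intro bind_pmf_cong) (auto simp: map_pmf_comp dest!: length_run)
    also have "\<dots> = run rep m"
      using Suc.IH \<open>m \<le> n\<close> by (simp add: map_pmf_def)
    finally show ?thesis .
  qed
qed

lemma E_run_take: "m \<le> n \<Longrightarrow> E (run rep n) (\<lambda>h. G (take m h)) = E (run rep m) G"
  by (simp flip: map_pmf_take_run)

lemma E_run_Suc: "E (run rep (Suc n)) G =
   E (run rep n) (\<lambda>h. E (\<phi> h (action rep (Suc n) h)) (\<lambda>x. G (h @ [(action rep (Suc n) h, x)])))"
  unfolding run_Suc_action
  by (simp add: E_bind_pmf_finite[OF finite_set_pmf_run[of rep "Suc n", unfolded run_Suc_action]])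

lemma cumrew_Nil [simp]: "cumrew j [] = 0"
  by (simp add: cumrew_def)

lemma cumrew_snoc [simp]: "cumrew j (h @ [(a, x)]) = cumrew j h + rwd (x ! j)"
  by (simp add: cumrew_def)

lemma qt_Bellman:
  assumes "1 \<le> t" "t \<le> T"
  shows "qt t i h a = E (\<phi> h a) (\<lambda>x. rwd (x ! i) + qt (Suc t) i (h @ [(a, x)])
            (f (\<lambda>b. \<Sum>m<k. qt (Suc t) m (h @ [(a, x)]) b)))"
proof -
  have "Suc T - t = Suc (T - t)" and "Suc T - Suc t = T - t"
    using assms by arith+
  then show ?thesis by (simp add: qt_def)
qed

text \<open>The expectation of Upsilon_t^j over the protocol run, whatever prefix of the last
  percept it conditions on (lemma E_UpsAt); P is the profile of time-t functions
  selecting the action.\<close>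

definition anticipated :: "('a, 'p) reports \<Rightarrow> nat \<Rightarrow> nat \<Rightarrow> ('a, 'p) profile \<Rightarrow> real" where
  "anticipated rep t j P =
     E (run rep (t - 1)) (\<lambda>h. cumrew j h + qt t j h (f (\<lambda>b. \<Sum>m<k. P m h b)))"

lemma UpsAt_take: "1 \<le> t \<Longrightarrow> UpsAt t j h l P = UpsAt t j (take (t - 1) h) l P"
  by (auto simp: UpsAt_def min_def)

lemma UpsAt_snoc:
  assumes "length g = s" and "length x = k" and "l \<le> k"
  shows "UpsAt (Suc (Suc s)) j (g @ [(a, x)]) l P =
    E (cond_pmf (\<phi> g a) {y. take l y = take l x})
      (\<lambda>y. cumrew j (g @ [(a, y)]) +
           qt (Suc (Suc s)) j (g @ [(a, y)]) (f (\<lambda>b. \<Sum>m<k. P m (g @ [(a, y)]) b)))"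
  using assms by (simp add: UpsAt_def Ups_def nth_append min_absorb2)

lemma E_UpsAt:
  assumes "1 \<le> t" "t \<le> T" "l \<le> k"
  shows "E (run rep T) (\<lambda>h. UpsAt t j h l P) = anticipated rep t j P"
proof -
  have "(\<lambda>h. UpsAt t j h l P) = (\<lambda>h. UpsAt t j (take (t - 1) h) l P)"
    using assms by (intro ext UpsAt_take)
  then have "E (run rep T) (\<lambda>h. UpsAt t j h l P) = E (run rep (t - 1)) (\<lambda>h. UpsAt t j h l P)"
    using E_run_take[of "t - 1" T rep "\<lambda>h. UpsAt t j h l P"] assms by simp
  also have "\<dots> = anticipated rep t j P"
  proof (cases "t = 1")
    case True
    then show ?thesis by (simp add: UpsAt_def anticipated_def)
  next
    case False
    with assms obtain s where s: "t = Suc (Suc s)"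
      by (metis One_nat_def Suc_le_D le_SucE le_zero_eq not0_implies_Suc)
    define F where "F g a = (\<lambda>y. cumrew j (g @ [(a, y)]) +
      qt t j (g @ [(a, y)]) (f (\<lambda>b. \<Sum>m<k. P m (g @ [(a, y)]) b)))" for g a
    let ?a = "action rep (Suc s)"
    have "E (run rep (t - 1)) (\<lambda>h. UpsAt t j h l P) =
      E (run rep s) (\<lambda>g. E (\<phi> g (?a g))
        (\<lambda>x. E (cond_pmf (\<phi> g (?a g)) {y. take l y = take l x}) (F g (?a g))))"
      unfolding s diff_Suc_1 E_run_Suc
      by (intro E_cong) (simp add: UpsAt_snoc length_run percept_length assms F_def s)
    also have "\<dots> = E (run rep s) (\<lambda>g. E (\<phi> g (?a g)) (F g (?a g)))"
      by (intro E_cong E_cond_pmf_total finite_set_pmf_phi)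
    also have "\<dots> = anticipated rep t j P"
      by (simp add: anticipated_def s E_run_Suc F_def)
    finally show ?thesis .
  qed
  finally show ?thesis .
qed

lemma anticipated_Bellman:
  assumes "1 \<le> t" "t \<le> T"
  shows "anticipated rep t i (\<lambda>m. rep m t) = anticipated rep (Suc t) i (qt (Suc t))"
proof -
  obtain s where s: "t = Suc s" using assms by (cases t) auto
  have "anticipated rep (Suc t) i (qt (Suc t)) =
    E (run rep s) (\<lambda>h. E (\<phi> h (action rep t h)) (\<lambda>x. cumrew i h + (rwd (x ! i) +
      qt (Suc t) i (h @ [(action rep t h, x)])
        (f (\<lambda>b. \<Sum>m<k. qt (Suc t) m (h @ [(action rep t h, x)]) b)))))"
    by (simp add: anticipated_def s E_run_Suc add.assoc)
  also have "\<dots> = anticipated rep t i (\<lambda>m. rep m t)"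
    unfolding anticipated_def s diff_Suc_1
    by (intro E_cong)
       (simp add: E_const_add finite_set_pmf_phi qt_Bellman[OF assms[unfolded s]] action_def)
  finally show ?thesis by simp
qed

lemma E_gam_truthful_payer:
  assumes "rep i = (\<lambda>t. qt t i)" "i < k" "1 \<le> t" "t \<le> T"
  shows "E (run rep T) (gam rep t i j) = 0"
proof -
  have "prof rep t (Suc i) = prof rep t i"
    using assms(1) by (auto simp: prof_def fun_eq_iff less_Suc_eq)
  then show ?thesis
    using assms unfolding gam_def[abs_def]
    by (simp add: Bochner_Integration.integral_diff[OF integrable_run integrable_run] E_UpsAt)
qed

lemma E_sum_gam_received:
  assumes "1 \<le> t" "t \<le> T"
  shows "E (run rep T) (\<lambda>h. \<Sum>j<k. gam rep t j i h) =
         anticipated rep t i (\<lambda>m. rep m t) - anticipated rep t i (qt t)"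
proof -
  have telescope: "(\<Sum>j<k. gam rep t j i h) =
      UpsAt t i h k (prof rep t k) - UpsAt t i h 0 (prof rep t 0)" for h
    using sum_lessThan_telescope[of "\<lambda>l. UpsAt t i h l (prof rep t l)" k]
    unfolding gam_def by simp
  have "(\<lambda>b. \<Sum>m<k. prof rep t k m h b) = (\<lambda>b. \<Sum>m<k. rep m t h b)" for h
    by (auto simp: prof_def intro!: sum.cong)
  moreover have "prof rep t 0 = qt t"
    by (simp add: prof_def fun_eq_iff)
  ultimately show ?thesis
    using assms unfolding telescope
    by (simp add: Bochner_Integration.integral_diff[OF integrable_run integrable_run] E_UpsAt
        anticipated_def)
qed

lemma E_pay_truthful:
  assumes "rep i = (\<lambda>t. qt t i)" "i < k" "1 \<le> t" "t \<le> T"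
  shows "E (run rep T) (pay rep t i) = anticipated rep t i (qt t) - anticipated rep t i (\<lambda>m. rep m t)"
proof -
  have "pay rep t i = (\<lambda>h. (\<Sum>j<k. gam rep t i j h) - (\<Sum>j<k. gam rep t j i h))"
    using assms(2) by (simp add: pay_def sum_diff1 fun_eq_iff)
  then show ?thesis
    using E_gam_truthful_payer[of rep i, OF assms] E_sum_gam_received[OF assms(3,4)]
    by (simp add: Bochner_Integration.integral_diff integrable_run)
qed

lemma util_eq_cumrew_plus_pay:
  assumes "h \<in> set_pmf (run rep T)"
  shows "util rep i h = cumrew i h + (\<Sum>t=1..T. pay rep t i h)"
proof -
  have "(\<Sum>t=1..T. rwd (snd (h ! (t - 1)) ! i)) = (\<Sum>t<T. rwd (snd (h ! t) ! i))"
    by (induction T) auto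
  also have "\<dots> = cumrew i h"
    using length_run[OF assms] by (simp add: cumrew_def sum_list_sum_nth atLeast0LessThan)
  finally show ?thesis by (simp add: util_def sum.distrib)
qed

lemma EU_truthful:
  assumes "rep i = (\<lambda>t. qt t i)" "i < k"
  shows "EU rep i = qt 1 i [] (f (\<lambda>b. \<Sum>l<k. qt 1 l [] b))"
proof -
  define B where "B t = anticipated rep t i (qt t)" for t
  have "EU rep i = E (run rep T) (cumrew i) + (\<Sum>t=1..T. E (run rep T) (pay rep t i))"
    unfolding EU_def
    by (simp add: E_cong[OF util_eq_cumrew_plus_pay] Bochner_Integration.integral_add
        integrable_run integral_sum)
  also have "(\<Sum>t=1..T. E (run rep T) (pay rep t i)) = (\<Sum>t=1..T. B t - B (Suc t))"
    by (intro sum.cong) (auto simp: E_pay_truthful[of rep i, OF assms] anticipated_Bellman B_def)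
  also have "\<dots> = B 1 - B (Suc T)"
    using sum_Suc_diff[of 1 T B] by (simp add: sum_subtractf)
  finally show ?thesis
    by (simp add: B_def anticipated_def qt_def)
qed

lemma sum_pay_eq_0: "(\<Sum>i<k. pay rep t i h) = 0"
proof -
  have "(\<Sum>i<k. pay rep t i h) = (\<Sum>i<k. (\<Sum>j<k. gam rep t i j h) - (\<Sum>j<k. gam rep t j i h))"
    by (rule sum.cong) (auto simp: pay_def sum_diff1)
  also have "\<dots> = 0"
    by (simp add: sum_subtractf) (rule sum.swap)
  finally show ?thesis .
qed

definition welfare_to_go :: "nat \<Rightarrow> ('a, 'p) hist \<Rightarrow> real" where
  "welfare_to_go n h = (\<Sum>l<k. qv n l h (f (\<lambda>b. \<Sum>l<k. qv n l h b)))"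

lemma sum_qv_Suc:
  "(\<Sum>l<k. qv (Suc n) l h a) = E (\<phi> h a) (\<lambda>x. (\<Sum>l<k. rwd (x ! l)) + welfare_to_go n (h @ [(a, x)]))"
  by (simp add: welfare_to_go_def integrable_phi sum.distrib Bochner_Integration.integral_add)

lemma E_welfare_le:
  assumes f_max: "\<And>g b. g b \<le> g (f g)" and "m \<le> T"
  shows "E (run rep m) (\<lambda>h. (\<Sum>i<k. cumrew i h) + welfare_to_go (T - m) h) \<le> welfare_to_go T []"
  using \<open>m \<le> T\<close>
proof (induction m)
  case 0
  then show ?case by simp
next
  case (Suc m)
  let ?a = "action rep (Suc m)"
  have T_m: "T - m = Suc (T - Suc m)"
    using Suc.prems by arith
  have "E (run rep (Suc m)) (\<lambda>h. (\<Sum>i<k. cumrew i h) + welfare_to_go (T - Suc m) h) =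
     E (run rep m) (\<lambda>g. (\<Sum>i<k. cumrew i g) + (\<Sum>l<k. qv (T - m) l g (?a g)))"
    unfolding E_run_Suc T_m sum_qv_Suc
    by (simp add: sum.distrib add.assoc E_const_add finite_set_pmf_phi)
  also have "\<dots> \<le> E (run rep m) (\<lambda>g. (\<Sum>i<k. cumrew i g) + welfare_to_go (T - m) g)"
    using f_max[of "\<lambda>b. \<Sum>l<k. qv (T - m) l _ b"]
    by (intro integral_mono integrable_run) (simp add: welfare_to_go_def)
  also have "\<dots> \<le> welfare_to_go T []"
    using Suc by simp
  finally show ?case .
qed

lemma sum_EU_le:
  assumes "\<And>g b. g b \<le> g (f g)"
  shows "(\<Sum>i<k. EU rep i) \<le> (\<Sum>i<k. qt 1 i [] (f (\<lambda>b. \<Sum>l<k. qt 1 l [] b)))"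
proof -
  have sum_util: "(\<Sum>i<k. util rep i h) = (\<Sum>i<k. cumrew i h) + welfare_to_go (T - T) h"
    if "h \<in> set_pmf (run rep T)" for h
  proof -
    have "(\<Sum>i<k. \<Sum>t=1..T. pay rep t i h) = (\<Sum>t=1..T. \<Sum>i<k. pay rep t i h)"
      by (rule sum.swap)
    then show ?thesis
      by (simp add: util_eq_cumrew_plus_pay[OF that] sum.distrib welfare_to_go_def sum_pay_eq_0)
  qed
  have "(\<Sum>i<k. EU rep i) = E (run rep T) (\<lambda>h. \<Sum>i<k. util rep i h)"
    by (simp add: EU_def integrable_run)
  also have "\<dots> = E (run rep T) (\<lambda>h. (\<Sum>i<k. cumrew i h) + welfare_to_go (T - T) h)"
    by (rule E_cong) (rule sum_util)
  also have "\<dots> \<le> welfare_to_go T []"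
    by (rule E_welfare_le[OF assms]) simp
  finally show ?thesis
    by (simp add: welfare_to_go_def qt_def)
qed

end

theorem theorem8:
  fixes T k :: nat
    and \<phi> :: "('a::finite, 'p::finite) hist \<Rightarrow> 'a \<Rightarrow> 'p list pmf"
    and rwd :: "'p \<Rightarrow> real"
    and f :: "('a \<Rightarrow> real) \<Rightarrow> 'a"
  assumes "\<forall>h a. \<forall>x \<in> set_pmf (\<phi> h a). length x = k"
    and "\<forall>g b. g b \<le> g (f g)"
  shows "\<exists>(qs :: nat \<Rightarrow> nat \<Rightarrow> ('a, 'p) hist \<Rightarrow> 'a \<Rightarrow> real) (C :: nat \<Rightarrow> real).
           (\<forall>i<k. \<forall>rep. grl_env.EU T k \<phi> rwd f (rep(i := qs i)) i \<ge> C i) \<and>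
           (SUP rep. \<Sum>i<k. grl_env.EU T k \<phi> rwd f rep i) = (\<Sum>i<k. C i)"
proof -
  interpret grl_finite T k \<phi> rwd f
    by unfold_locales (use assms(1) in auto)
  define truthful :: "('a, 'p) reports" where
    "truthful = (\<lambda>i t. qt t i)"
  define C where "C i = qt 1 i [] (f (\<lambda>b. \<Sum>l<k. qt 1 l [] b))" for i
  have guaranteed: "EU (rep(i := truthful i)) i = C i" if "i < k" for rep i
    using that EU_truthful[of "rep(i := truthful i)" i] by (simp add: truthful_def C_def)
  have "(SUP rep. \<Sum>i<k. EU rep i) = (\<Sum>i<k. C i)"
  proof (rule cSup_eq_maximum)
    have "(\<Sum>i<k. EU truthful i) = (\<Sum>i<k. C i)"
      using guaranteed[of _ truthful] by simp
    then show "(\<Sum>i<k. C i) \<in> range (\<lambda>rep. \<Sum>i<k. EU rep i)"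
      by (metis rangeI)
  qed (use sum_EU_le assms(2) in \<open>auto simp: C_def\<close>)
  then show ?thesis
    using guaranteed by (intro exI[of _ truthful] exI[of _ C]) auto
qed

end
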